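(* Let $W$ be a weak $V$-module and $z$ a nonzero complex number. For $v\in V$ and $\alpha\in\mathcal D_{P(z)}(W)$, $$x_0^{-1}\delta\!\left(\frac{x-z}{x_0}\right)Y^*(v,x)\alpha-x_0^{-1}\delta\!\left(\frac{z-x}{-x_0}\right)Y^R_{P(z)}(v,x)\alpha=z^{-1}\delta\!\left(\frac{x-x_0}{z}\right)Y^L_{P(z)}(v,x_0)\alpha.$$
   Context: $V$ is a vertex operator algebra with vacuum $\mathbf 1$, Virasoro element $\omega$, $Y(\omega,x)=\sum_{n}L(n)x^{-n-2}$, and $V=\coprod_{n\in\mathbb Z}V_{(n)}$ graded by $L(0)$-eigenvalues. The formal delta function is $\delta(x)=\sum_{n\in\mathbb Z}x^n$; binomial expressions $(x_1-x_2)^n$ are expanded in nonnegative powers of the second variable. A weak $V$-module is a vector space $W$ with a linear map $Y_W:V\to(\mathrm{End}\,W)[[x,x^{-1}]]$ such that $Y_W(v,x)w\in W((x))$, $Y_W(\mathbf 1,x)=\mathrm{id}_W$, and the Jacobi identity $x_0^{-1}\delta(\frac{x_1-x_2}{x_0})Y_W(u,x_1)Y_W(v,x_2)-x_0^{-1}\delta(\frac{x_2-x_1}{-x_0})Y_W(v,x_2)Y_W(u,x_1)=x_2^{-1}\delta(\frac{x_1-x_0}{x_2})Y_W(Y(u,x_0)v,x_2)$ holds. For $v\in V$ set $Y^o(v,x)=Y_W(e^{xL(1)}(-x^{-2})^{L(0)}v,x^{-1})$; then $Y^o(v,x)w\in W((x^{-1}))$. For $\alpha\in W^*$ define $Y^*(v,x)\alpha=\sum_{n\in\mathbb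 Z}v^*_n\alpha\,x^{-n-1}\in W^*[[x,x^{-1}]]$ by $\langle Y^*(v,x)\alpha,w\rangle=\langle\alpha,Y^o(v,x)w\rangle$ for $w\in W$. For a nonzero complex number $z$, $\alpha\in W^*$ is a $P(z)$-linear functional if for all $v\in V,w\in W$ the series $\langle\alpha,Y^o(v,x)w\rangle$ converges absolutely in $|x|>|z|$ to a rational function in $\mathbb C[x,x^{-1},(x-z)^{-1}]$, and for each fixed $v$ the orders of the poles at $0$ and at $z$ of these rational functions are bounded independently of $w$. $\mathcal D_{P(z)}(W)$ is the space of $P(z)$-linear functionals on $W$. Let $\iota_{x;\infty}$ and $\iota_{x;0}$ be the injective maps from the field $\mathbb C(x)$ of rational functions to Laurent series sending a rational function to its Laurent expansion at $x=\infty$ and at $x=0$, respectively. For $v\in V$, $\alpha\in\mathcal D_{P(z)}(W)$, $w\in W$, let $f_{v,\alpha,w}=\iota_{x;\infty}^{-1}\langle\alpha,Y^o(v,x)w\rangle$; define $Y^R_{P(z)}(v,x)\alpha,\ Y^L_{P(z)}(v,x)\alpha\in W^*[[x,x^{-1}]]$ by $\langle Y^R_{P(z)}(v,x)\alpha,w\rangle=\iota_{x;0}f_{v,\alpha,w}(x)$ and $\langle Y^L_{P(z)}(v,x)\alpha,w\rangle=\iota_{x;0}\big(f_{v,\alpha,w}(x+z)\big)$. *)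

theory Defs
  imports "HOL-Complex_Analysis.Complex_Analysis"
begin

text \<open>A formal series in several variables is represented by its coefficient function
  (exponent tuple to coefficient).  Products of formal series are defined coefficientwise
  by the (in all our uses finitely supported) sum over the nonzero terms.\<close>

definition fsum :: "('i \<Rightarrow> 'a::comm_monoid_add) \<Rightarrow> 'a" where
  "fsum f = sum f {i. f i \<noteq> 0}"

text \<open>Coefficient of y1^a y2^b in the binomial expression (y1 - y2)^n, expanded in
  nonnegative powers of the second variable y2.\<close>
definition binom_exp :: "int \<Rightarrow> int \<Rightarrow> int \<Rightarrow> complex" where
  "binom_exp n a b = (if 0 \<le> b \<and> a + b = n
       then (-1) ^ nat b * (of_int n gchoose nat b) else 0)"

text \<open>Coefficient of x0^p y1^a y2^b in x0^{-1} delta((y1 - y2)/x0) = sum_n (y1-y2)^n x0^{-n-1}.\<close>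
definition delta_coeff :: "int \<Rightarrow> int \<Rightarrow> int \<Rightarrow> complex" where
  "delta_coeff p a b = binom_exp (-p-1) a b"

text \<open>Coefficient of x0^p y1^a y2^b in x0^{-1} delta((y2 - y1)/(-x0))
  = sum_n (y2-y1)^n (-1)^n x0^{-n-1}, with (y2-y1)^n expanded in nonnegative powers of y1.\<close>
definition delta_coeff_neg :: "int \<Rightarrow> int \<Rightarrow> int \<Rightarrow> complex" where
  "delta_coeff_neg p a b = (-1) powi (-p-1) * binom_exp (-p-1) b a"

text \<open>Coefficient (at exponents (p,q,r)) of the product of a complex 3-variable series D
  with a 3-variable series S with coefficients in a vector space (scalar multiplication sm).\<close>
definition fprod3 :: "(complex \<Rightarrow> 'w \<Rightarrow> 'w::ab_group_add) \<Rightarrow> (int \<Rightarrow> int \<Rightarrow> int \<Rightarrow> complex)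
     \<Rightarrow> (int \<Rightarrow> int \<Rightarrow> int \<Rightarrow> 'w) \<Rightarrow> int \<Rightarrow> int \<Rightarrow> int \<Rightarrow> 'w" where
  "fprod3 sm D S p q r = fsum (\<lambda>(i,j,k). sm (D i j k) (S (p-i) (q-j) (r-k)))"

text \<open>Coefficient (at exponents (p,a)) of the product of a complex 2-variable series E with a
  2-variable series S with coefficients in the algebraic dual W^* (functionals 'w => complex);
  the result is the functional w |-> sum over nonzero terms (weak definition of the product).\<close>
definition fprod2 :: "(int \<Rightarrow> int \<Rightarrow> complex) \<Rightarrow> (int \<Rightarrow> int \<Rightarrow> 'w \<Rightarrow> complex)
     \<Rightarrow> int \<Rightarrow> int \<Rightarrow> 'w \<Rightarrow> complex" where
  "fprod2 E S p a = (\<lambda>w. fsum (\<lambda>(i,j). E i j * S (p-i) (a-j) w))"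

text \<open>Vertex operators are given by their modes:  Y u n = u_n, where
  Y(u,x) = sum_n u_n x^{-n-1}; so the coefficient of x^k is Y u (-k-1).\<close>

text \<open>The Jacobi identity for Y_M (on M) w.r.t. Y (on V), compared coefficientwise at
  x0^p x1^q x2^r and applied to each vector w.\<close>
definition jacobi_identity :: "('v \<Rightarrow> int \<Rightarrow> 'v \<Rightarrow> 'v) \<Rightarrow> (complex \<Rightarrow> 'w \<Rightarrow> 'w::ab_group_add)
     \<Rightarrow> ('v \<Rightarrow> int \<Rightarrow> 'w \<Rightarrow> 'w) \<Rightarrow> bool" where
  "jacobi_identity Y sm YM \<longleftrightarrow> (\<forall>u v w p q r.
     fprod3 sm (\<lambda>i j k. delta_coeff i j k)
        (\<lambda>i j k. if i = 0 then YM u (-j-1) (YM v (-k-1) w) else 0) p q r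
   - fprod3 sm (\<lambda>i j k. delta_coeff_neg i j k)
        (\<lambda>i j k. if i = 0 then YM v (-k-1) (YM u (-j-1) w) else 0) p q r
   = fprod3 sm (\<lambda>i j k. delta_coeff k j i)
        (\<lambda>i j k. if j = 0 then YM (Y u (-i-1) v) (-k-1) w else 0) p q r)"

definition Lop :: "('v \<Rightarrow> int \<Rightarrow> 'v \<Rightarrow> 'v) \<Rightarrow> 'v \<Rightarrow> int \<Rightarrow> 'v \<Rightarrow> 'v" where
  "Lop Y om n = Y om (n + 1)"

definition Vgr :: "(complex \<Rightarrow> 'v \<Rightarrow> 'v) \<Rightarrow> ('v \<Rightarrow> int \<Rightarrow> 'v \<Rightarrow> 'v) \<Rightarrow> 'v \<Rightarrow> int \<Rightarrow> 'v set" where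
  "Vgr sm Y om n = {v. Lop Y om 0 v = sm (of_int n) v}"

definition is_VOA :: "(complex \<Rightarrow> 'v \<Rightarrow> 'v::ab_group_add) \<Rightarrow> ('v \<Rightarrow> int \<Rightarrow> 'v \<Rightarrow> 'v)
     \<Rightarrow> 'v \<Rightarrow> 'v \<Rightarrow> bool" where
  "is_VOA sm Y vac om \<longleftrightarrow>
     vector_space sm
   \<and> (\<forall>u n. Vector_Spaces.linear sm sm (Y u n))
   \<and> (\<forall>n v. Vector_Spaces.linear sm sm (\<lambda>u. Y u n v))
   \<and> (\<forall>u v. \<exists>N. \<forall>n\<ge>N. Y u n v = 0)
   \<and> (\<forall>n. Y vac n = (if n = -1 then id else (\<lambda>_. 0)))
   \<and> (\<forall>v. (\<forall>n\<ge>0. Y v n vac = 0) \<and> Y v (-1) vac = v)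
   \<and> jacobi_identity Y sm Y
   \<and> (\<exists>c::complex. \<forall>m n v.
        Lop Y om m (Lop Y om n v) - Lop Y om n (Lop Y om m v)
        = sm (of_int (m - n)) (Lop Y om (m + n) v)
          + (if m + n = 0 then sm ((of_int m ^ 3 - of_int m) / 12 * c) v else 0))
   \<and> (\<forall>v n. Y (Lop Y om (-1) v) n = (\<lambda>w. sm (- of_int n) (Y v (n - 1) w)))
   \<and> (\<forall>v. \<exists>f. finite {n. f n \<noteq> 0} \<and> (\<forall>n. f n \<in> Vgr sm Y om n) \<and> v = sum f {n. f n \<noteq> 0})
   \<and> (\<forall>n. \<exists>B. finite B \<and> module.span sm B = Vgr sm Y om n)
   \<and> (\<exists>N. \<forall>n<N. Vgr sm Y om n = {0})"

definition is_weak_module :: "('v \<Rightarrow> int \<Rightarrow> 'v \<Rightarrow> 'v) \<Rightarrow> 'v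
     \<Rightarrow> (complex \<Rightarrow> 'w \<Rightarrow> 'w::ab_group_add) \<Rightarrow> ('v \<Rightarrow> int \<Rightarrow> 'w \<Rightarrow> 'w) \<Rightarrow> (complex \<Rightarrow> 'v \<Rightarrow> 'v::ab_group_add) \<Rightarrow> bool" where
  "is_weak_module Y vac smW YW smV \<longleftrightarrow>
     vector_space smW
   \<and> (\<forall>u n. Vector_Spaces.linear smW smW (YW u n))
   \<and> (\<forall>n w. Vector_Spaces.linear smV smW (\<lambda>u. YW u n w))
   \<and> (\<forall>u w. \<exists>N. \<forall>n\<ge>N. YW u n w = 0)
   \<and> (\<forall>n. YW vac n = (if n = -1 then id else (\<lambda>_. 0)))
   \<and> jacobi_identity Y smW YW"

definition hcomp :: "(complex \<Rightarrow> 'v \<Rightarrow> 'v::ab_group_add) \<Rightarrow> ('v \<Rightarrow> int \<Rightarrow> 'v \<Rightarrow> 'v) \<Rightarrow> 'v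
     \<Rightarrow> 'v \<Rightarrow> int \<Rightarrow> 'v" where
  "hcomp sm Y om v = (THE f. finite {n. f n \<noteq> 0} \<and> (\<forall>n. f n \<in> Vgr sm Y om n)
                           \<and> v = sum f {n. f n \<noteq> 0})"

text \<open>Coefficient of x^m in Y^o(v,x) w = Y_W(e^{x L(1)} (-x^{-2})^{L(0)} v, x^{-1}) w.
  For u in V_(k):  e^{xL(1)}(-x^{-2})^{L(0)} u = sum_j ((-1)^k / j!) x^{j-2k} L(1)^j u, and
  Y_W(u', x^{-1}) = sum_n u'_n x^{n+1}.\<close>
definition Yopp :: "(complex \<Rightarrow> 'v \<Rightarrow> 'v::ab_group_add) \<Rightarrow> ('v \<Rightarrow> int \<Rightarrow> 'v \<Rightarrow> 'v) \<Rightarrow> 'v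
     \<Rightarrow> (complex \<Rightarrow> 'w \<Rightarrow> 'w::ab_group_add) \<Rightarrow> ('v \<Rightarrow> int \<Rightarrow> 'w \<Rightarrow> 'w) \<Rightarrow> 'v \<Rightarrow> int \<Rightarrow> 'w \<Rightarrow> 'w" where
  "Yopp smV Y om smW YW v m w =
     fsum (\<lambda>k::int. fsum (\<lambda>j::nat.
        smW ((-1) powi k / fact j)
            (YW ((Lop Y om 1 ^^ j) (hcomp smV Y om v k)) (m - 1 - int j + 2 * k) w)))"

definition Ystar :: "(complex \<Rightarrow> 'v \<Rightarrow> 'v::ab_group_add) \<Rightarrow> ('v \<Rightarrow> int \<Rightarrow> 'v \<Rightarrow> 'v) \<Rightarrow> 'v
     \<Rightarrow> (complex \<Rightarrow> 'w \<Rightarrow> 'w::ab_group_add) \<Rightarrow> ('v \<Rightarrow> int \<Rightarrow> 'w \<Rightarrow> 'w) \<Rightarrow> 'v \<Rightarrow> ('w \<Rightarrow> complex)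
     \<Rightarrow> int \<Rightarrow> 'w \<Rightarrow> complex" where
  "Ystar smV Y om smW YW v \<alpha> m = (\<lambda>w. \<alpha> (Yopp smV Y om smW YW v m w))"

text \<open>P(z)-linear functionals:  alpha in W^* such that for every v there is a bound N with:
  for all w, the series <alpha, Y^o(v,x)w> converges absolutely for |x| > |z| to a rational
  function of the form p(x) / (x^N (x-z)^N), p a polynomial; i.e. to an element of
  C[x,x^{-1},(x-z)^{-1}] whose poles at 0 and z have order at most N.\<close>
definition D_Pz :: "(complex \<Rightarrow> 'v \<Rightarrow> 'v::ab_group_add) \<Rightarrow> ('v \<Rightarrow> int \<Rightarrow> 'v \<Rightarrow> 'v) \<Rightarrow> 'v
     \<Rightarrow> (complex \<Rightarrow> 'w \<Rightarrow> 'w::ab_group_add) \<Rightarrow> ('v \<Rightarrow> int \<Rightarrow> 'w \<Rightarrow> 'w) \<Rightarrow> complex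
     \<Rightarrow> ('w \<Rightarrow> complex) set" where
  "D_Pz smV Y om smW YW z = {\<alpha>. Vector_Spaces.linear smW (*) \<alpha> \<and>
     (\<forall>v. \<exists>N::nat. \<forall>w. \<exists>p::complex poly. \<forall>x. cmod x > cmod z \<longrightarrow>
        (\<lambda>m. cmod (\<alpha> (Yopp smV Y om smW YW v m w) * x powi m)) summable_on UNIV
      \<and> ((\<lambda>m. \<alpha> (Yopp smV Y om smW YW v m w) * x powi m)
            has_sum (poly p x / (x ^ N * (x - z) ^ N))) UNIV)}"

definition rational_fn :: "(complex \<Rightarrow> complex) \<Rightarrow> bool" where
  "rational_fn f \<longleftrightarrow> (\<exists>p q :: complex poly. q \<noteq> 0 \<and>
      (\<forall>x. poly q x \<noteq> 0 \<longrightarrow> f x = poly p x / poly q x))"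

definition iota0 :: "(complex \<Rightarrow> complex) \<Rightarrow> int \<Rightarrow> complex" where
  "iota0 f m = fls_nth (laurent_expansion f 0) m"

definition iota_inf :: "(complex \<Rightarrow> complex) \<Rightarrow> int \<Rightarrow> complex" where
  "iota_inf f m = fls_nth (laurent_expansion (\<lambda>y. f (inverse y)) 0) (-m)"

text \<open>f_{v,alpha,w} = iota_{x;infinity}^{-1} <alpha, Y^o(v,x) w> (a rational function,
  determined up to its values at finitely many points, which do not affect expansions).\<close>
definition f_val :: "(complex \<Rightarrow> 'v \<Rightarrow> 'v::ab_group_add) \<Rightarrow> ('v \<Rightarrow> int \<Rightarrow> 'v \<Rightarrow> 'v) \<Rightarrow> 'v
     \<Rightarrow> (complex \<Rightarrow> 'w \<Rightarrow> 'w::ab_group_add) \<Rightarrow> ('v \<Rightarrow> int \<Rightarrow> 'w \<Rightarrow> 'w) \<Rightarrow> 'v \<Rightarrow> ('w \<Rightarrow> complex)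
     \<Rightarrow> 'w \<Rightarrow> complex \<Rightarrow> complex" where
  "f_val smV Y om smW YW v \<alpha> w = (SOME f. rational_fn f \<and>
      iota_inf f = (\<lambda>m. \<alpha> (Yopp smV Y om smW YW v m w)))"

definition YR :: "(complex \<Rightarrow> 'v \<Rightarrow> 'v::ab_group_add) \<Rightarrow> ('v \<Rightarrow> int \<Rightarrow> 'v \<Rightarrow> 'v) \<Rightarrow> 'v
     \<Rightarrow> (complex \<Rightarrow> 'w \<Rightarrow> 'w::ab_group_add) \<Rightarrow> ('v \<Rightarrow> int \<Rightarrow> 'w \<Rightarrow> 'w) \<Rightarrow> 'v \<Rightarrow> ('w \<Rightarrow> complex)
     \<Rightarrow> int \<Rightarrow> 'w \<Rightarrow> complex" where
  "YR smV Y om smW YW v \<alpha> m = (\<lambda>w. iota0 (f_val smV Y om smW YW v \<alpha> w) m)"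

definition YL :: "(complex \<Rightarrow> 'v \<Rightarrow> 'v::ab_group_add) \<Rightarrow> ('v \<Rightarrow> int \<Rightarrow> 'v \<Rightarrow> 'v) \<Rightarrow> 'v
     \<Rightarrow> (complex \<Rightarrow> 'w \<Rightarrow> 'w::ab_group_add) \<Rightarrow> ('v \<Rightarrow> int \<Rightarrow> 'w \<Rightarrow> 'w) \<Rightarrow> complex \<Rightarrow> 'v
     \<Rightarrow> ('w \<Rightarrow> complex) \<Rightarrow> int \<Rightarrow> 'w \<Rightarrow> complex" where
  "YL smV Y om smW YW z v \<alpha> m = (\<lambda>w. iota0 (\<lambda>x. f_val smV Y om smW YW v \<alpha> w (x + z)) m)"

end

theory Submission
  imports Defs
begin

text \<open>For fixed \<open>w\<close>, the hypothesis on \<open>\<alpha>\<close> makes \<open>\<langle>\<alpha>, Y\<^sup>o(v,x) w\<rangle>\<close> the expansion at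
  \<open>x = \<infinity>\<close> of a rational function \<open>f = P(x) / (x\<^sup>N (x - z)\<^sup>N)\<close>; this identifies its coefficients, by
  uniqueness of two-sided Laurent expansions on \<open>|x| > |z|\<close> (a Liouville argument), and shows that
  \<open>Y\<^sup>R\<close> and \<open>Y\<^sup>L\<close> are the expansions of \<open>f\<close> at \<open>0\<close> and at \<open>z\<close>. The coefficient of \<open>x\<^sub>0\<^sup>p x\<^sup>a\<close> in
  the three delta-function terms is then the residue of \<open>f(x) x\<^sup>-\<^sup>a\<^sup>-\<^sup>1 (x - z)\<^sup>-\<^sup>p\<^sup>-\<^sup>1 dx\<close> at
  \<open>\<infinity>\<close>, \<open>0\<close> and \<open>z\<close>, and the identity is the residue theorem on the Riemann sphere. It is
  verified formally: multiplying \<open>f\<close> by \<open>x\<close> or by \<open>x - z\<close> only shifts \<open>(p, a)\<close>, which reduces it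
  to \<open>f = 1\<close>, a binomial identity.\<close>

section \<open>Finite sums and coefficients of products\<close>

lemma fsum_eq_sum:
  assumes "finite S" "{i. f i \<noteq> 0} \<subseteq> S"
  shows "fsum f = sum f S"
  unfolding fsum_def using assms by (intro sum.mono_neutral_left) auto

lemma fsum_eq_single:
  assumes "\<And>i. i \<noteq> i0 \<Longrightarrow> f i = 0"
  shows "fsum f = f i0"
proof -
  have "fsum f = sum f {i0}"
    by (rule fsum_eq_sum) (use assms in auto)
  then show ?thesis by simp
qed

lemma fsum_reindex:
  assumes "inj h" and outside: "\<And>x. x \<notin> range h \<Longrightarrow> g x = 0"
  shows "fsum g = fsum (\<lambda>y. g (h y))"
proof -
  have supp: "{x. g x \<noteq> 0} = h ` {y. g (h y) \<noteq> 0}"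
  proof
    show "{x. g x \<noteq> 0} \<subseteq> h ` {y. g (h y) \<noteq> 0}"
    proof
      fix x assume x: "x \<in> {x. g x \<noteq> 0}"
      then obtain y where "x = h y" using outside by blast
      with x show "x \<in> h ` {y. g (h y) \<noteq> 0}" by blast
    qed
  qed blast
  show ?thesis
  proof (cases "finite {y. g (h y) \<noteq> 0}")
    case True
    have "fsum g = sum g (h ` {y. g (h y) \<noteq> 0})"
      unfolding fsum_def supp ..
    also have "\<dots> = sum (g \<circ> h) {y. g (h y) \<noteq> 0}"
      by (rule sum.reindex) (use assms(1) in \<open>auto intro: inj_on_subset\<close>)
    finally show ?thesis unfolding fsum_def by simp
  next
    case False
    then have "infinite {x. g x \<noteq> 0}"
      unfolding supp using assms(1) by (metis finite_imageD inj_on_subset subset_UNIV)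
    then show ?thesis using False unfolding fsum_def by simp
  qed
qed

lemma fls_nth_mult_fsum:
  fixes F G :: "'a::semiring_0 fls"
  shows "fls_nth (F * G) n = fsum (\<lambda>k. fls_nth F k * fls_nth G (n - k))"
proof -
  have "{k. fls_nth F k * fls_nth G (n - k) \<noteq> 0} \<subseteq> {fls_subdegree F..n - fls_subdegree G}"
  proof
    fix k assume "k \<in> {k. fls_nth F k * fls_nth G (n - k) \<noteq> 0}"
    then have "fls_nth F k \<noteq> 0" "fls_nth G (n - k) \<noteq> 0" by auto
    then have "\<not> k < fls_subdegree F" "\<not> n - k < fls_subdegree G"
      using fls_eq0_below_subdegree by blast+
    then show "k \<in> {fls_subdegree F..n - fls_subdegree G}" by simp
  qed
  then show ?thesis
    unfolding fls_times_nth(2) by (rule fsum_eq_sum[symmetric, OF finite_atLeastAtMost_int])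
qed

section \<open>Integer powers of affine Laurent polynomials\<close>

lemma fls_nth_one_plus_const_X_powi:
  fixes c :: "'a::field_char_0"
  shows "fls_nth ((1 + fls_const c * fls_X) powi n) k =
           (if k < 0 then 0 else (of_int n gchoose nat k) * c ^ nat k)"
proof (cases "c = 0")
  case False
  let ?H = "fps_const c * fps_X"
  have H: "?H \<noteq> 0" "fps_nth ?H 0 = 0" using False by (auto simp: fps_eq_iff)
  have "1 + fls_const c * fls_X = fls_compose_fps (1 + fls_X) ?H"
    using H by (simp add: fls_compose_fps_add fls_times_fps_to_fls flip: fps_X_to_fls fps_const_to_fls)
  also have "fls_compose_fps (1 + fls_X) ?H powi n = fls_compose_fps ((1 + fls_X) powi n) ?H"
    using H by (simp add: fls_compose_fps_powi)
  also have "\<dots> = fps_to_fls (fps_binomial (of_int n) oo ?H)"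
    using H by (simp add: one_plus_fls_X_powi_eq)
  finally have "(1 + fls_const c * fls_X) powi n = fps_to_fls (fps_binomial (of_int n) oo ?H)" .
  then show ?thesis by (simp add: fps_compose_linear)
qed (auto simp: power_0_left)

lemma fls_nth_X_plus_const_powi:
  fixes c :: "'a::field_char_0"
  assumes "c \<noteq> 0"
  shows "fls_nth ((fls_X + fls_const c) powi n) k =
           (if k < 0 then 0 else (of_int n gchoose nat k) * c powi (n - k))"
proof -
  have "fls_const c * fls_const (1 / c) = (1 :: 'a fls)"
    using assms by (simp add: fls_const_mult_const)
  then have "fls_X + fls_const c = fls_const c * (1 + fls_const (1 / c) * fls_X)"
    by (simp add: algebra_simps flip: mult.assoc)
  then have "(fls_X + fls_const c) powi n = fls_const (c powi n) * (1 + fls_const (1 / c) * fls_X) powi n"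
    by (simp add: power_int_mult_distrib fls_const_power_int)
  moreover have "c powi n * (1 / c) ^ nat k = c powi (n - k)" if "0 \<le> k"
  proof -
    have "(1 / c) ^ nat k = c powi (-k)"
      using that by (simp add: power_int_def inverse_eq_divide power_one_over)
    then show ?thesis
      using assms by (simp add: power_int_add[symmetric])
  qed
  ultimately show ?thesis
    by (simp add: fls_nth_one_plus_const_X_powi mult.left_commute)
qed

lemma fls_nth_X_minus_const_powi:
  fixes c :: "'a::field_char_0"
  assumes "c \<noteq> 0"
  shows "fls_nth ((fls_X - fls_const c) powi n) k =
           (if k < 0 then 0 else (of_int n gchoose nat k) * (-c) powi (n - k))"
  using fls_nth_X_plus_const_powi[of "-c" n k] assms by (simp add: fls_const_uminus)

lemma fls_X_inv_powi: "fls_X_inv powi n = (fls_shift n 1 :: 'a::field fls)"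
  by (simp add: fls_inverse_X[symmetric] power_int_inverse fls_inverse_X_intpow)

lemma fls_nth_X_inv_plus_const_powi:
  fixes c :: "'a::field_char_0"
  shows "fls_nth ((fls_X_inv + fls_const c) powi n) k =
           (if k + n < 0 then 0 else (of_int n gchoose nat (k + n)) * c ^ nat (k + n))"
proof -
  have "fls_X_inv * fls_X = (1 :: 'a fls)"
    by (simp add: fls_X_inv_times_conv_shift)
  then have "fls_X_inv + fls_const c = fls_X_inv * (1 + fls_const c * (fls_X :: 'a fls))"
    by (simp add: algebra_simps flip: mult.assoc)
  then have "(fls_X_inv + fls_const c) powi n = fls_shift n ((1 + fls_const c * fls_X) powi n)"
    by (simp add: power_int_mult_distrib fls_X_inv_powi fls_shifted_times_simps)
  then show ?thesis by (simp add: fls_nth_one_plus_const_X_powi)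
qed

lemma fls_nth_X_inv_minus_const_powi:
  fixes c :: "'a::field_char_0"
  shows "fls_nth ((fls_X_inv - fls_const c) powi n) k =
           (if k + n < 0 then 0 else (of_int n gchoose nat (k + n)) * (-c) ^ nat (k + n))"
  using fls_nth_X_inv_plus_const_powi[of "-c" n k] by (simp add: fls_const_uminus)

lemma fls_X_inv_minus_const_nonzero: "fls_X_inv - fls_const c \<noteq> (0 :: 'a::ring_1 fls)"
proof
  assume "fls_X_inv - fls_const c = (0 :: 'a fls)"
  then have "fls_nth (fls_X_inv - fls_const c :: 'a fls) (-1) = 0" by simp
  then show False by simp
qed

lemma fls_X_plus_const_nonzero: "fls_X + fls_const c \<noteq> (0 :: 'a::ring_1 fls)"
proof
  assume "fls_X + fls_const c = (0 :: 'a fls)"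
  then have "fls_nth (fls_X + fls_const c :: 'a fls) 1 = 0" by simp
  then show False by simp
qed

lemma fls_X_minus_const_nonzero: "fls_X - fls_const c \<noteq> (0 :: 'a::ring_1 fls)"
  using fls_X_plus_const_nonzero[of "-c"] by (simp add: fls_const_uminus)

section \<open>The delta-function kernels at \<open>x\<^sub>2 = z\<close>\<close>

lemma fsum_delta_coeff_powi:
  "fsum (\<lambda>b. delta_coeff p j b * z powi b) = fls_nth ((fls_X_inv - fls_const z) powi (-p-1)) (-j)"
proof -
  have "fsum (\<lambda>b. delta_coeff p j b * z powi b) = delta_coeff p j (-p-1-j) * z powi (-p-1-j)"
    by (rule fsum_eq_single) (auto simp: delta_coeff_def binom_exp_def)
  also have "\<dots> = fls_nth ((fls_X_inv - fls_const z) powi (-p-1)) (-j)"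
    by (simp add: delta_coeff_def binom_exp_def fls_nth_X_inv_minus_const_powi power_int_nonneg_exp power_minus[of z])
  finally show ?thesis .
qed

lemma fsum_delta_coeff_neg_powi:
  assumes "z \<noteq> 0"
  shows "fsum (\<lambda>b. delta_coeff_neg p j b * z powi b) = fls_nth ((fls_X - fls_const z) powi (-p-1)) j"
proof -
  have "fsum (\<lambda>b. delta_coeff_neg p j b * z powi b) = delta_coeff_neg p j (-p-1-j) * z powi (-p-1-j)"
    by (rule fsum_eq_single) (auto simp: delta_coeff_neg_def binom_exp_def)
  also have "\<dots> = fls_nth ((fls_X - fls_const z) powi (-p-1)) j"
  proof (cases "0 \<le> j")
    case True
    have "(-1::complex) ^ nat j = (-1) powi (-j)"
      using True by (simp add: power_int_minus_one_minus power_int_def)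
    then have "(-1) powi (-p-1) * (-1) ^ nat j = ((-1) powi (-p-1-j) :: complex)"
      by (simp add: power_int_add[symmetric])
    moreover have "(-z) powi (-p-1-j) = (-1) powi (-p-1-j) * z powi (-p-1-j)"
      by (metis mult_minus1 power_int_mult_distrib)
    ultimately have "(-1) powi (-p-1) * (-1) ^ nat j * z powi (-p-1-j) = (-z) powi (-p-1-j)"
      by simp
    then show ?thesis
      using assms True by (simp add: delta_coeff_neg_def binom_exp_def fls_nth_X_minus_const_powi mult_ac)
  qed (simp add: delta_coeff_neg_def binom_exp_def fls_nth_X_minus_const_powi assms)
  finally show ?thesis .
qed

lemma fsum_delta_coeff_swap_powi:
  assumes "z \<noteq> 0"
  shows "fsum (\<lambda>s. delta_coeff s a i * z powi s) = fls_nth ((fls_X + fls_const z) powi (-a-1)) i"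
proof -
  have "fsum (\<lambda>s. delta_coeff s a i * z powi s) = delta_coeff (-a-1-i) a i * z powi (-a-1-i)"
    by (rule fsum_eq_single) (auto simp: delta_coeff_def binom_exp_def)
  also have "\<dots> = fls_nth ((fls_X + fls_const z) powi (-a-1)) i"
  proof (cases "0 \<le> i")
    case True
    have "(of_int (-a-1) gchoose nat i :: complex) = (-1) ^ nat i * (of_int (a + i) gchoose nat i)"
      using gbinomial_minus[of "of_int (a + 1) :: complex" "nat i"] True by simp
    then show ?thesis
      using assms True by (simp add: delta_coeff_def binom_exp_def fls_nth_X_plus_const_powi add.commute)
  qed (simp add: delta_coeff_def binom_exp_def fls_nth_X_plus_const_powi assms)
  finally show ?thesis .
qed

lemma fprod2_if_fst_eq_0:
  "fprod2 E (\<lambda>i j. if i = 0 then T j else (\<lambda>_. 0)) p a w = fsum (\<lambda>j. E p j * T (a - j) w)"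
  unfolding fprod2_def by (subst fsum_reindex[of "Pair p"]) (auto simp: inj_def)

lemma fprod2_if_snd_eq_0:
  "fprod2 E (\<lambda>i j. if j = 0 then T i else (\<lambda>_. 0)) p a w = fsum (\<lambda>i. E i a * T (p - i) w)"
  unfolding fprod2_def by (subst fsum_reindex[of "\<lambda>i. (i, a)"]) (auto simp: inj_def)

lemma fprod2_delta_coeff:
  assumes "\<And>m. T m w = fls_nth F (-m)"
  shows "fprod2 (\<lambda>i j. fsum (\<lambda>b. delta_coeff i j b * z powi b)) (\<lambda>i j. if i = 0 then T j else (\<lambda>_. 0)) p a w
       = fls_nth ((fls_X_inv - fls_const z) powi (-p-1) * F) (-a)"
proof -
  have "fls_nth ((fls_X_inv - fls_const z) powi (-p-1) * F) (-a)
      = fsum (\<lambda>j. fls_nth ((fls_X_inv - fls_const z) powi (-p-1)) (-j) * fls_nth F (-a - -j))"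
    unfolding fls_nth_mult_fsum by (rule fsum_reindex) (auto simp: inj_def surj_def)
  then show ?thesis
    by (simp add: fprod2_if_fst_eq_0 fsum_delta_coeff_powi assms)
qed

lemma fprod2_delta_coeff_neg:
  assumes "z \<noteq> 0" "\<And>m. T m w = fls_nth F m"
  shows "fprod2 (\<lambda>i j. fsum (\<lambda>b. delta_coeff_neg i j b * z powi b)) (\<lambda>i j. if i = 0 then T j else (\<lambda>_. 0)) p a w
       = fls_nth ((fls_X - fls_const z) powi (-p-1) * F) a"
  by (simp add: fprod2_if_fst_eq_0 fsum_delta_coeff_neg_powi assms fls_nth_mult_fsum)

lemma fprod2_delta_coeff_swap:
  assumes "z \<noteq> 0" "\<And>m. T m w = fls_nth F m"
  shows "fprod2 (\<lambda>i j. fsum (\<lambda>s. delta_coeff s j i * z powi s)) (\<lambda>i j. if j = 0 then T i else (\<lambda>_. 0)) p a w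
       = fls_nth ((fls_X + fls_const z) powi (-a-1) * F) p"
  by (simp add: fprod2_if_snd_eq_0 fsum_delta_coeff_swap_powi assms fls_nth_mult_fsum)

section \<open>Residues of rational functions with poles at \<open>0\<close>, \<open>z\<close> and \<open>\<infinity>\<close>\<close>

lemma gbinomial_of_int_nonneg:
  "0 \<le> m \<Longrightarrow> (of_int m gchoose k :: 'a::field_char_0) = of_nat (nat m choose k)"
  by (metis binomial_gbinomial int_nat_eq of_int_of_nat_eq)

lemma gbinomial_of_int_neg:
  assumes "m < 0"
  shows "(of_int m gchoose k :: 'a::field_char_0) = (-1) ^ k * of_nat (nat (-m) - 1 + k choose k)"
proof -
  have "(of_int m :: 'a) = - of_nat (nat (-m))" using assms by simp
  then have "(of_int m gchoose k :: 'a) = (-1) ^ k * (of_nat (nat (-m)) + of_nat k - 1 gchoose k)"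
    by (simp add: gbinomial_minus)
  also have "(of_nat (nat (-m)) + of_nat k - 1 :: 'a) = of_nat (nat (-m) - 1 + k)"
    using assms by (simp add: of_nat_diff)
  finally show ?thesis by (simp add: binomial_gbinomial)
qed

lemma gbinomial_residue_identity_nonneg:
  fixes n a :: int
  assumes "0 \<le> n"
  shows "(if a \<le> n then of_int n gchoose nat (n - a) else 0)
       = (if 0 \<le> a then of_int n gchoose nat a else (0::'a::field_char_0))"
proof -
  obtain k where k: "n = int k" using assms by (metis nonneg_int_cases)
  consider "a < 0" | i where "a = int i" "i \<le> k" | "n < a"
    using k by (metis nonneg_int_cases not_less of_nat_le_iff)
  then show ?thesis
  proof cases
    case 1
    then have "k < nat (n - a)" using k by simp
    then show ?thesis using 1 k by (simp add: binomial_gbinomial[symmetric] binomial_eq_0)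
  next
    case 2
    then have "nat (n - a) = k - i" using k by simp
    then show ?thesis using 2 k by (simp add: binomial_gbinomial[symmetric] binomial_symmetric[symmetric])
  next
    case 3
    then have "k < nat a" using k by simp
    then show ?thesis using 3 k by (simp add: binomial_gbinomial[symmetric] binomial_eq_0)
  qed
qed

lemma gbinomial_residue_identity_neg:
  fixes n a :: int
  assumes "n < 0"
  shows "(if a \<le> n then of_int n gchoose nat (n - a) else 0)
       - (if 0 \<le> a then of_int n gchoose nat a else 0)
       = (-1) powi (n - a) * (of_int (-a-1) gchoose nat (-n-1) :: 'a::field_char_0)"
proof -
  define q where "q = nat (- n - 1)"
  have q: "n = - int q - 1" using assms by (simp add: q_def)
  consider "0 \<le> a" | "a \<le> n" | "n < a" "a < 0" by linarith
  then show ?thesis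
  proof cases
    case 1
    then obtain i where i: "a = int i" by (metis nonneg_int_cases)
    have "nat (-n) - 1 + i = q + i" "nat (-(-a-1)) - 1 + q = i + q" using q i by simp_all
    then have "(of_int n gchoose i :: 'a) = (-1) ^ i * of_nat (q + i choose i)"
      "(of_int (-a-1) gchoose q :: 'a) = (-1) ^ q * of_nat (i + q choose q)"
      using gbinomial_of_int_neg[of n i] gbinomial_of_int_neg[of "-a-1" q] q i by simp_all
    moreover have "((-1) powi (n - a) :: 'a) = - ((-1) ^ i * (-1) ^ q)"
      using q i by (simp add: power_int_minus_left minus_one_power_iff)
    moreover have "q + i choose i = i + q choose q"
      using binomial_symmetric[of i "q + i"] by (simp add: add.commute)
    ultimately show ?thesis using q i by simp
  next
    case 2
    then obtain j where j: "n - a = int j" by (metis diff_ge_0_iff_ge nonneg_int_cases)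
    have "nat (-n) - 1 + j = q + j" "nat (-a-1) = q + j" using q j by simp_all
    then have "(of_int n gchoose j :: 'a) = (-1) ^ j * of_nat (q + j choose j)"
      "(of_int (-a-1) gchoose q :: 'a) = of_nat (q + j choose q)"
      using gbinomial_of_int_neg[of n j] gbinomial_of_int_nonneg[of "-a-1" q] q j by simp_all
    moreover have "((-1) powi (n - a) :: 'a) = (-1) ^ j"
      using j by simp
    moreover have "q + j choose j = q + j choose q"
      using binomial_symmetric[of j "q + j"] by simp
    ultimately show ?thesis using q j by simp
  next
    case 3
    then have "nat (-a-1) < q" using q by simp
    then have "(of_int (-a-1) gchoose q :: 'a) = 0"
      using gbinomial_of_int_nonneg[of "-a-1" q] 3 by (simp add: binomial_eq_0)
    then show ?thesis using 3 q by simp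
  qed
qed

text \<open>The case \<open>f = 1\<close> of the residue theorem: with \<open>n = -p-1\<close> and
  the common factor \<open>(-z) powi (n - a)\<close> removed, the three terms are the residues at \<open>0\<close>, \<open>z\<close> and
  infinity of \<open>x powi (-a-1) * (x - z) powi n\<close>.\<close>

lemma gbinomial_residue_identity:
  fixes n a :: int
  defines "res0 \<equiv> if 0 \<le> a then of_int n gchoose nat a else 0"
    and "resz \<equiv> if n < 0 then (-1) powi (n - a) * (of_int (-a-1) gchoose nat (-n-1)) else 0"
    and "resinf \<equiv> if a \<le> n then of_int n gchoose nat (n - a) else 0"
  shows "res0 + resz - resinf = (0::'a::field_char_0)"
proof (cases "n < 0")
  case True
  then have "resz = (-1) powi (n - a) * (of_int (-a-1) gchoose nat (-n-1))"
    by (simp add: resz_def)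
  also have "\<dots> = resinf - res0"
    unfolding resinf_def res0_def by (rule gbinomial_residue_identity_neg[OF True, symmetric])
  finally show ?thesis by simp
next
  case False
  then have "resz = 0" "resinf = res0"
    unfolding resz_def resinf_def res0_def by (simp, intro gbinomial_residue_identity_nonneg) simp
  then show ?thesis by simp
qed

text \<open>If \<open>Finf\<close>, \<open>F0\<close> and \<open>Fz\<close> are the Laurent expansions of a rational function \<open>f\<close> at
  infinity (in the variable \<open>1/x\<close>), at \<open>0\<close> and at \<open>z\<close> (in the variable \<open>x - z\<close>), this is the
  sum of the residues of \<open>f(x) x\<^sup>-\<^sup>a\<^sup>-\<^sup>1 (x - z)\<^sup>-\<^sup>p\<^sup>-\<^sup>1 dx\<close> at \<open>0\<close>, \<open>z\<close> and infinity.\<close>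

definition residue_sum ::
    "complex \<Rightarrow> complex fls \<Rightarrow> complex fls \<Rightarrow> complex fls \<Rightarrow> int \<Rightarrow> int \<Rightarrow> complex" where
  "residue_sum z Finf F0 Fz p a =
     fls_nth ((fls_X - fls_const z) powi (-p-1) * F0) a
   + fls_nth ((fls_X + fls_const z) powi (-a-1) * Fz) p
   - fls_nth ((fls_X_inv - fls_const z) powi (-p-1) * Finf) (-a)"

lemma residue_sum_add:
  "residue_sum z (F1 + G1) (F2 + G2) (F3 + G3) p a = residue_sum z F1 F2 F3 p a + residue_sum z G1 G2 G3 p a"
  by (simp add: residue_sum_def distrib_left)

lemma residue_sum_const_mult:
  "residue_sum z (fls_const c * F1) (fls_const c * F2) (fls_const c * F3) p a = c * residue_sum z F1 F2 F3 p a"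
  by (simp add: residue_sum_def mult.left_commute[of _ "fls_const c"] right_diff_distrib distrib_left)

lemma residue_sum_mult_X:
  "residue_sum z (fls_X_inv * F1) (fls_X * F2) ((fls_X + fls_const z) * F3) p a
     = residue_sum z F1 F2 F3 p (a - 1)"
proof -
  have "(fls_X + fls_const z) powi (-a-1) * (fls_X + fls_const z)
      = (fls_X + fls_const z) powi (-(a-1)-1)"
    using power_int_minus_mult[OF disjI1[OF fls_X_plus_const_nonzero[of z]], where n = "-a"] by simp
  then show ?thesis
    by (simp add: residue_sum_def mult.left_commute[of _ fls_X_inv] mult.left_commute[of _ fls_X]
        fls_X_inv_times_conv_shift fls_X_times_conv_shift fls_shifted_times_simps flip: mult.assoc)
qed

lemma residue_sum_mult_X_minus_const:
  "residue_sum z ((fls_X_inv - fls_const z) * F1) ((fls_X - fls_const z) * F2) (fls_X * F3) p a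
     = residue_sum z F1 F2 F3 (p - 1) a"
proof -
  have "(fls_X_inv - fls_const z) powi (-p-1) * (fls_X_inv - fls_const z)
      = (fls_X_inv - fls_const z) powi (-(p-1)-1)"
    "(fls_X - fls_const z) powi (-p-1) * (fls_X - fls_const z) = (fls_X - fls_const z) powi (-(p-1)-1)"
    using power_int_minus_mult[OF disjI1[OF fls_X_inv_minus_const_nonzero[of z]], where n = "-p"]
      power_int_minus_mult[OF disjI1[OF fls_X_minus_const_nonzero[of z]], where n = "-p"] by simp_all
  then show ?thesis
    by (simp add: residue_sum_def mult.left_commute[of _ fls_X] fls_X_times_conv_shift
        fls_shifted_times_simps flip: mult.assoc)
qed

lemma residue_sum_mult_X_power:
  "residue_sum z (fls_X_inv ^ k * F1) (fls_X ^ k * F2) ((fls_X + fls_const z) ^ k * F3) p a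
     = residue_sum z F1 F2 F3 p (a - int k)"
proof (induction k arbitrary: a)
  case (Suc k)
  then show ?case
    using residue_sum_mult_X[of z "fls_X_inv ^ k * F1" "fls_X ^ k * F2" "(fls_X + fls_const z) ^ k * F3" p a]
    by (simp add: mult.assoc algebra_simps)
qed simp

lemma residue_sum_mult_X_minus_const_power:
  "residue_sum z ((fls_X_inv - fls_const z) ^ k * F1) ((fls_X - fls_const z) ^ k * F2) (fls_X ^ k * F3) p a
     = residue_sum z F1 F2 F3 (p - int k) a"
proof (induction k arbitrary: p)
  case (Suc k)
  then show ?case
    using residue_sum_mult_X_minus_const[of z "(fls_X_inv - fls_const z) ^ k * F1"
        "(fls_X - fls_const z) ^ k * F2" "fls_X ^ k * F3" p a]
    by (simp add: mult.assoc algebra_simps)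
qed simp

lemma residue_sum_one:
  assumes "z \<noteq> 0"
  shows "residue_sum z 1 1 1 p a = 0"
proof -
  define n where "n = -p-1"
  define w where "w = (-z) powi (n - a)"
  let ?res0 = "if 0 \<le> a then of_int n gchoose nat a else 0"
  let ?resz = "if n < 0 then (-1) powi (n - a) * (of_int (-a-1) gchoose nat (-n-1)) else 0"
  let ?resinf = "if a \<le> n then of_int n gchoose nat (n - a) else 0"
  have "fls_nth ((fls_X - fls_const z) powi n) a = ?res0 * w"
    using assms by (simp add: fls_nth_X_minus_const_powi w_def)
  moreover have "-a-1-p = n - a" by (simp add: n_def)
  then have "(-1) powi (n - a) * w = z powi (-a-1-p)"
    unfolding w_def by (simp only:) (simp add: power_int_mult_distrib[symmetric])
  then have "fls_nth ((fls_X + fls_const z) powi (-a-1)) p = ?resz * w"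
    using assms by (simp add: fls_nth_X_plus_const_powi n_def mult_ac)
  moreover have "fls_nth ((fls_X_inv - fls_const z) powi n) (-a) = ?resinf * w"
    by (simp add: fls_nth_X_inv_minus_const_powi power_int_nonneg_exp w_def)
  ultimately have "residue_sum z 1 1 1 p a = (?res0 + ?resz - ?resinf) * w"
    unfolding residue_sum_def mult_1_right n_def[symmetric] by (simp only: distrib_right left_diff_distrib)
  also have "?res0 + ?resz - ?resinf = 0"
    by (rule gbinomial_residue_identity)
  finally show ?thesis by simp
qed

definition poly_fls :: "'a::comm_ring_1 poly \<Rightarrow> 'a fls \<Rightarrow> 'a fls" where
  "poly_fls P U = poly (map_poly fls_const P) U"

lemma poly_fls_0 [simp]: "poly_fls 0 U = 0"
  by (simp add: poly_fls_def)

lemma poly_fls_pCons: "poly_fls (pCons c q) U = fls_const c + U * poly_fls q U"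
  by (cases "c = 0 \<and> q = 0") (auto simp: poly_fls_def map_poly_pCons)

lemma residue_sum_poly_fls:
  assumes "z \<noteq> 0"
  shows "residue_sum z (poly_fls P fls_X_inv) (poly_fls P fls_X) (poly_fls P (fls_X + fls_const z)) p a = 0"
proof (induction P arbitrary: a)
  case (pCons c q)
  then show ?case
    using residue_sum_add[of z "fls_const c * 1"] residue_sum_const_mult[of z c 1 1 1]
      residue_sum_mult_X residue_sum_one[OF assms]
    by (simp add: poly_fls_pCons)
qed (simp add: residue_sum_def)

definition pole_fls :: "complex poly \<Rightarrow> nat \<Rightarrow> complex \<Rightarrow> complex fls \<Rightarrow> complex fls" where
  "pole_fls P N z U = poly_fls P U / (U ^ N * (U - fls_const z) ^ N)"

lemma residue_sum_pole_fls:
  assumes "z \<noteq> 0"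
  shows "residue_sum z (pole_fls P N z fls_X_inv) (pole_fls P N z fls_X) (pole_fls P N z (fls_X + fls_const z)) p a = 0"
proof -
  let ?F1 = "pole_fls P N z fls_X_inv" and ?F2 = "pole_fls P N z fls_X"
    and ?F3 = "pole_fls P N z (fls_X + fls_const z)"
  have cancel: "A ^ N * (B ^ N * (Q / (A ^ N * B ^ N))) = Q" if "A \<noteq> 0" "B \<noteq> 0" for A B Q :: "complex fls"
    using that by (simp add: field_simps)
  have X_inv: "fls_X_inv \<noteq> (0 :: complex fls)"
    using fls_X_inv_minus_const_nonzero[of 0] by simp
  have shift: "fls_X + fls_const z - fls_const z = (fls_X :: complex fls)" by simp
  have "residue_sum z ?F1 ?F2 ?F3 p a
      = residue_sum z ((fls_X_inv - fls_const z) ^ N * ?F1) ((fls_X - fls_const z) ^ N * ?F2)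
          (fls_X ^ N * ?F3) (p + int N) a"
    using residue_sum_mult_X_minus_const_power[of z N ?F1 ?F2 ?F3 "p + int N" a] by simp
  also have "\<dots> = residue_sum z (fls_X_inv ^ N * ((fls_X_inv - fls_const z) ^ N * ?F1))
          (fls_X ^ N * ((fls_X - fls_const z) ^ N * ?F2)) ((fls_X + fls_const z) ^ N * (fls_X ^ N * ?F3))
          (p + int N) (a + int N)"
    using residue_sum_mult_X_power[of z N _ _ _ "p + int N" "a + int N"] by simp
  also have "fls_X_inv ^ N * ((fls_X_inv - fls_const z) ^ N * ?F1) = poly_fls P fls_X_inv"
    unfolding pole_fls_def by (rule cancel[OF X_inv fls_X_inv_minus_const_nonzero])
  also have "fls_X ^ N * ((fls_X - fls_const z) ^ N * ?F2) = poly_fls P fls_X"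
    unfolding pole_fls_def by (rule cancel[OF fls_X_nonzero fls_X_minus_const_nonzero])
  also have "(fls_X + fls_const z) ^ N * (fls_X ^ N * ?F3) = poly_fls P (fls_X + fls_const z)"
    unfolding pole_fls_def shift by (rule cancel[OF fls_X_plus_const_nonzero fls_X_nonzero])
  finally show ?thesis
    using residue_sum_poly_fls[OF assms] by simp
qed

section \<open>Uniqueness of two-sided Laurent series\<close>

lemma has_sum_reindex_vanishing:
  assumes "inj h" "\<And>m. m \<notin> range h \<Longrightarrow> g m = 0"
  shows "((\<lambda>k. g (h k)) has_sum S) UNIV \<longleftrightarrow> (g has_sum S) UNIV"
proof -
  have "(g has_sum S) (range h) \<longleftrightarrow> ((g \<circ> h) has_sum S) UNIV"
    by (rule has_sum_reindex) (use assms(1) in simp)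
  moreover have "(g has_sum S) (range h) \<longleftrightarrow> (g has_sum S) UNIV"
    by (rule has_sum_cong_neutral) (use assms(2) in auto)
  ultimately show ?thesis by (simp add: comp_def)
qed

lemma summable_on_reindex_vanishing:
  assumes "inj h" "\<And>m. m \<notin> range h \<Longrightarrow> g m = 0"
  shows "(\<lambda>k. g (h k)) summable_on UNIV \<longleftrightarrow> g summable_on UNIV"
  unfolding summable_on_def using has_sum_reindex_vanishing[of h g, OF assms] by blast

lemma has_sum_int_split_nat:
  fixes g :: "int \<Rightarrow> 'a::banach"
  defines "pos \<equiv> \<lambda>k::nat. if k = 0 then 0 else g (int k)"
    and "nonpos \<equiv> \<lambda>k::nat. g (- int k)"
  assumes abs: "(\<lambda>m. norm (g m)) summable_on UNIV"
  shows "summable (\<lambda>k. norm (pos k))" "summable (\<lambda>k. norm (nonpos k))"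
    and "(g has_sum (suminf pos + suminf nonpos)) UNIV"
proof -
  define gpos where "gpos = (\<lambda>m. if 0 < m then g m else 0)"
  define gnonpos where "gnonpos = (\<lambda>m. if m \<le> 0 then g m else 0)"
  have inj: "inj (int :: nat \<Rightarrow> int)" "inj (\<lambda>k::nat. - int k)"
    by (auto simp: inj_def)
  have pos_eq: "pos = (\<lambda>k. gpos (int k))" and nonpos_eq: "nonpos = (\<lambda>k. gnonpos (- int k))"
    by (auto simp: pos_def gpos_def nonpos_def gnonpos_def)
  have out: "gpos m = 0" if "m \<notin> range int" for m
    using that by (auto simp: gpos_def) (metis nonneg_int_cases rangeI less_le_not_le)
  have out': "gnonpos m = 0" if "m \<notin> range (\<lambda>k::nat. - int k)" for m
    using that unfolding gnonpos_def by (auto simp: image_iff) (metis minus_minus nonneg_int_cases neg_0_le_iff_le)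
  have "(\<lambda>m. norm (gpos m)) summable_on UNIV" "(\<lambda>m. norm (gnonpos m)) summable_on UNIV"
    by (rule summable_on_comparison_test[OF abs]; simp add: gpos_def gnonpos_def)+
  then have "(\<lambda>k. norm (pos k)) summable_on UNIV" "(\<lambda>k. norm (nonpos k)) summable_on UNIV"
    unfolding pos_eq nonpos_eq
    by (subst summable_on_reindex_vanishing[OF inj(1)] summable_on_reindex_vanishing[OF inj(2)];
        simp add: out out')+
  then show sp: "summable (\<lambda>k. norm (pos k))" and sn: "summable (\<lambda>k. norm (nonpos k))"
    by (simp_all add: summable_on_UNIV_nonneg_real_iff)
  have "(pos has_sum suminf pos) UNIV" "(nonpos has_sum suminf nonpos) UNIV"
    using sp sn by (auto intro!: norm_summable_imp_has_sum summable_sums summable_norm_cancel)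
  then have "(gpos has_sum suminf pos) UNIV" "(gnonpos has_sum suminf nonpos) UNIV"
    unfolding pos_eq nonpos_eq
    by (simp_all add: has_sum_reindex_vanishing[OF inj(1)] has_sum_reindex_vanishing[OF inj(2)] out out')
  then have "((\<lambda>m. gpos m + gnonpos m) has_sum (suminf pos + suminf nonpos)) UNIV"
    by (rule has_sum_add)
  moreover have "(\<lambda>m. gpos m + gnonpos m) = g"
    by (auto simp: gpos_def gnonpos_def)
  ultimately show "(g has_sum (suminf pos + suminf nonpos)) UNIV" by simp
qed

lemma fps_eq_0_if_eval_eq_0_punctured:
  fixes B :: "complex fps" and \<rho> :: real
  assumes \<rho>: "\<rho> > 0" "ereal \<rho> \<le> fps_conv_radius B"
    and zero: "\<And>y. y \<noteq> 0 \<Longrightarrow> norm y < \<rho> \<Longrightarrow> eval_fps B y = 0"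
  shows "B = 0"
proof -
  have radius: "norm (0::complex) < fps_conv_radius B"
    using \<rho> by (metis less_ereal.simps(1) norm_zero order.strict_trans2)
  then have "isCont (eval_fps B) 0"
    by (rule continuous_eval_fps)
  then have "(eval_fps B \<longlongrightarrow> eval_fps B 0) (at 0)"
    by (simp add: isCont_def)
  moreover have "(eval_fps B \<longlongrightarrow> 0) (at 0)"
    by (rule tendsto_eventually) (use \<rho> zero in \<open>auto simp: eventually_at intro!: exI[of _ \<rho>]\<close>)
  ultimately have "eval_fps B 0 = 0"
    by (rule tendsto_unique[OF at_neq_bot])
  then have "\<forall>\<^sub>F y in nhds 0. eval_fps B y = eval_fps 0 y"
    using zero eventually_nhds_in_open[of "ball 0 \<rho>" 0] \<rho>
    by (smt (verit) eval_fps_0 eventually_mono mem_ball_0 open_ball centre_in_ball)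
  then show "B = 0"
    by (rule eval_fps_eqD[rotated 2]) (use radius in \<open>auto simp: zero_ereal_def\<close>)
qed

lemma entire_fps_plus_fps_inverse_eq_0:
  fixes A B :: "complex fps" and \<rho> :: real
  assumes A_entire: "\<And>x :: complex. norm x < fps_conv_radius A" and A0: "fps_nth A 0 = 0"
    and \<rho>: "\<rho> > 0" "ereal \<rho> \<le> fps_conv_radius B"
    and sum0: "\<And>x. norm x > 1 / \<rho> \<Longrightarrow> eval_fps A x + eval_fps B (inverse x) = 0"
  shows "A = 0" "B = 0"
proof -
  have "ereal (norm y) < fps_conv_radius B" if "norm y \<le> \<rho> / 2" for y :: complex
    using that \<rho> by (metis less_ereal.simps(1) order.strict_trans2 half_gt_zero_iff le_less_trans
        field_sum_of_halves less_add_same_cancel1)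
  then have B_cont: "continuous_on (cball 0 (\<rho> / 2)) (eval_fps B)"
    by (intro continuous_on_subset[OF continuous_on_eval_fps]) auto
  have A_hol: "eval_fps A holomorphic_on UNIV"
    by (rule holomorphic_on_eval_fps) (use A_entire in \<open>auto simp: subset_eq\<close>)
  obtain MA where MA: "\<And>x. norm x \<le> 2 / \<rho> \<Longrightarrow> norm (eval_fps A x) \<le> MA"
    using compact_imp_bounded[OF compact_continuous_image[OF holomorphic_on_imp_continuous_on
        [OF holomorphic_on_subset[OF A_hol]] compact_cball]]
    unfolding bounded_iff by (metis UNIV_I image_eqI mem_cball_0 subsetI)
  obtain MB where MB: "\<And>y. norm y \<le> \<rho> / 2 \<Longrightarrow> norm (eval_fps B y) \<le> MB"
    using compact_imp_bounded[OF compact_continuous_image[OF B_cont compact_cball]]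
    unfolding bounded_iff by (metis image_eqI mem_cball_0)
  have "norm (eval_fps A x) \<le> max MA MB" for x
  proof (cases "norm x \<le> 2 / \<rho>")
    case False
    then have x: "norm x > 2 / \<rho>" by simp
    moreover have "1 / \<rho> < 2 / \<rho>" using \<rho> by (simp add: divide_strict_right_mono)
    ultimately have "eval_fps A x = - eval_fps B (inverse x)"
      using sum0 by (simp add: eq_neg_iff_add_eq_0)
    moreover have "inverse (norm x) < inverse (2 / \<rho>)"
      using x \<rho> by (intro less_imp_inverse_less) auto
    then have "norm (eval_fps B (inverse x)) \<le> MB"
      by (intro MB) (simp add: norm_inverse)
    ultimately show ?thesis by simp
  qed (use MA in \<open>auto intro: max.coboundedI1\<close>)
  then have "eval_fps A constant_on UNIV"
    by (intro Liouville_theorem[OF A_hol]) (auto simp: bounded_iff)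
  then have A_zero: "eval_fps A x = 0" for x
    using A0 by (metis UNIV_I constant_on_def eval_fps_at_0)
  show "A = 0"
    by (rule eval_fps_eqD) (use A_entire[of 0] A_zero in \<open>auto simp: zero_ereal_def\<close>)
  show "B = 0"
  proof (rule fps_eq_0_if_eval_eq_0_punctured[OF \<rho>])
    fix y :: complex assume y: "y \<noteq> 0" "norm y < \<rho>"
    then have "inverse \<rho> < inverse (norm y)"
      by (intro less_imp_inverse_less) auto
    then have "norm (inverse y) > 1 / \<rho>"
      by (simp add: norm_divide inverse_eq_divide)
    then show "eval_fps B y = 0" using sum0[of "inverse y"] A_zero by simp
  qed
qed

definition fps_pos_part :: "(int \<Rightarrow> 'a::zero) \<Rightarrow> 'a fps" where
  "fps_pos_part d = Abs_fps (\<lambda>k. if k = 0 then 0 else d (int k))"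

definition fps_nonpos_part :: "(int \<Rightarrow> 'a) \<Rightarrow> 'a fps" where
  "fps_nonpos_part d = Abs_fps (\<lambda>k. d (- int k))"

lemma has_sum_powi_fps_parts:
  fixes d :: "int \<Rightarrow> complex"
  assumes "x \<noteq> 0" "(\<lambda>m. norm (d m * x powi m)) summable_on UNIV"
  shows "summable (\<lambda>k. norm (fps_nth (fps_pos_part d) k * x ^ k))"
    and "summable (\<lambda>k. norm (fps_nth (fps_nonpos_part d) k * inverse x ^ k))"
    and "((\<lambda>m. d m * x powi m) has_sum
           (eval_fps (fps_pos_part d) x + eval_fps (fps_nonpos_part d) (inverse x))) UNIV"
proof -
  have pos: "(if k = 0 then 0 else d (int k) * x powi int k) = fps_nth (fps_pos_part d) k * x ^ k"
    and nonpos: "d (- int k) * x powi (- int k) = fps_nth (fps_nonpos_part d) k * inverse x ^ k" for k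
    using assms(1) by (simp_all add: fps_pos_part_def fps_nonpos_part_def power_int_minus power_inverse)
  note split = has_sum_int_split_nat[OF assms(2), unfolded pos nonpos]
  show "summable (\<lambda>k. norm (fps_nth (fps_pos_part d) k * x ^ k))"
    and "summable (\<lambda>k. norm (fps_nth (fps_nonpos_part d) k * inverse x ^ k))"
    by (fact split(1), fact split(2))
  show "((\<lambda>m. d m * x powi m) has_sum
           (eval_fps (fps_pos_part d) x + eval_fps (fps_nonpos_part d) (inverse x))) UNIV"
    using split(3) by (simp add: eval_fps_def)
qed

lemma fps_conv_radius_ge_if_norm_summable:
  "summable (\<lambda>k. norm (fps_nth A k * x ^ k)) \<Longrightarrow> ereal (norm x) \<le> fps_conv_radius A"
  unfolding fps_conv_radius_def by (rule conv_radius_geI[OF summable_norm_cancel])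

lemma norm_less_fps_conv_radius_if_summable_outside:
  fixes A :: "complex fps"
  assumes "\<And>y::complex. norm y > R \<Longrightarrow> summable (\<lambda>k. norm (fps_nth A k * y ^ k))"
  shows "norm x < fps_conv_radius A"
proof -
  define t where "t = max R 0 + norm x + 1"
  have t: "t > R" "t > norm x" "t > 0" using norm_ge_zero[of x] unfolding t_def by linarith+
  then have "ereal (norm (complex_of_real t)) \<le> fps_conv_radius A"
    by (intro fps_conv_radius_ge_if_norm_summable assms) simp
  then show ?thesis using t by (metis less_ereal.simps(1) norm_of_real abs_of_pos order.strict_trans2)
qed

lemma two_sided_series_coeffs_eq_0:
  fixes d :: "int \<Rightarrow> complex" and r :: real
  assumes summable: "\<And>x. norm x > r \<Longrightarrow> (\<lambda>m. norm (d m * x powi m)) summable_on UNIV"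
    and zero: "\<And>x. norm x > r \<Longrightarrow> ((\<lambda>m. d m * x powi m) has_sum 0) UNIV"
  shows "d m = 0"
proof -
  define R where "R = max r 0 + 1"
  have R: "R > 0" "R > r" by (auto simp: R_def)
  let ?A = "fps_pos_part d" and ?B = "fps_nonpos_part d"
  have parts: "summable (\<lambda>k. norm (fps_nth ?A k * x ^ k))"
      "summable (\<lambda>k. norm (fps_nth ?B k * inverse x ^ k))"
      "eval_fps ?A x + eval_fps ?B (inverse x) = 0"
    if "norm x > R" for x
  proof -
    from that R have x: "x \<noteq> 0" "norm x > r" by auto
    note p = has_sum_powi_fps_parts[OF x(1) summable[OF x(2)]]
    show "summable (\<lambda>k. norm (fps_nth ?A k * x ^ k))"
      "summable (\<lambda>k. norm (fps_nth ?B k * inverse x ^ k))"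
      by (fact p(1), fact p(2))
    show "eval_fps ?A x + eval_fps ?B (inverse x) = 0"
      using has_sum_unique[OF p(3) zero[OF x(2)]] .
  qed
  have A_radius: "norm x < fps_conv_radius ?A" for x :: complex
    using parts(1) by (rule norm_less_fps_conv_radius_if_summable_outside)
  define t where "t = R + 1"
  have t: "t > R" "t > 0" using R by (simp_all add: t_def)
  have "ereal (norm (inverse (complex_of_real t))) \<le> fps_conv_radius ?B"
    using t by (intro fps_conv_radius_ge_if_norm_summable parts(2)) simp
  moreover have "norm (inverse (complex_of_real t)) = 1 / t"
    using t by (simp add: norm_divide inverse_eq_divide)
  ultimately have B_radius: "ereal (1 / t) \<le> fps_conv_radius ?B" by simp
  have sum0: "eval_fps ?A x + eval_fps ?B (inverse x) = 0" if "norm x > 1 / (1 / t)" for x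
    using that t parts(3) by simp
  have "?A = 0" "?B = 0"
    using entire_fps_plus_fps_inverse_eq_0[OF A_radius _ _ B_radius sum0] t
    by (simp_all add: fps_pos_part_def)
  then have "fps_nth ?A (nat m) = 0" "fps_nth ?B (nat (-m)) = 0" by simp_all
  then show ?thesis
    unfolding fps_pos_part_def fps_nonpos_part_def by (cases "0 < m") simp_all
qed

lemma two_sided_series_coeffs_unique:
  fixes c c' :: "int \<Rightarrow> complex" and r :: real
  assumes "\<And>x. norm x > r \<Longrightarrow> (\<lambda>m. norm (c m * x powi m)) summable_on UNIV"
    and "\<And>x. norm x > r \<Longrightarrow> ((\<lambda>m. c m * x powi m) has_sum f x) UNIV"
    and "\<And>x. norm x > r \<Longrightarrow> (\<lambda>m. norm (c' m * x powi m)) summable_on UNIV"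
    and "\<And>x. norm x > r \<Longrightarrow> ((\<lambda>m. c' m * x powi m) has_sum f x) UNIV"
  shows "c = c'"
proof
  fix m
  show "c m = c' m"
  proof (rule two_sided_series_coeffs_eq_0[where d = "\<lambda>m. c m - c' m", simplified])
    fix x :: complex assume x: "norm x > r"
    have "(\<lambda>m. norm (c m * x powi m) + norm (c' m * x powi m)) summable_on UNIV"
      using assms(1,3)[OF x] by (rule summable_on_add)
    then show "(\<lambda>m. norm ((c m - c' m) * x powi m)) summable_on UNIV"
      by (rule summable_on_comparison_test) (auto simp: left_diff_distrib intro: norm_triangle_ineq4)
    show "((\<lambda>m. (c m - c' m) * x powi m) has_sum 0) UNIV"
      using has_sum_add[OF assms(2)[OF x] has_sum_uminusI[OF assms(4)[OF x]]]
      by (simp add: left_diff_distrib)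
  qed
qed

section \<open>Rational functions and their expansions\<close>

definition pole_ratfun :: "complex poly \<Rightarrow> nat \<Rightarrow> complex \<Rightarrow> complex \<Rightarrow> complex" where
  "pole_ratfun P N z x = poly P x / (x ^ N * (x - z) ^ N)"

lemma has_laurent_expansion_poly:
  assumes "g has_laurent_expansion U"
  shows "(\<lambda>x. poly P (g x)) has_laurent_expansion poly_fls P U"
proof (induction P)
  case (pCons c q)
  have "(\<lambda>x. c + g x * poly q (g x)) has_laurent_expansion fls_const c + U * poly_fls q U"
    by (intro laurent_expansion_intros assms pCons.IH)
  then show ?case by (simp add: poly_fls_pCons)
qed simp

lemma has_laurent_expansion_pole_ratfun:
  assumes "g has_laurent_expansion U"
  shows "(\<lambda>x. pole_ratfun P N z (g x)) has_laurent_expansion pole_fls P N z U"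
  unfolding pole_ratfun_def pole_fls_def by (intro laurent_expansion_intros has_laurent_expansion_poly assms)

lemma rational_fn_pole_ratfun: "rational_fn (pole_ratfun P N z)"
  unfolding rational_fn_def
proof (intro exI conjI allI impI)
  show "[:0, 1:] ^ N * [:-z, 1:] ^ N \<noteq> (0 :: complex poly)" by simp
  fix x assume "poly ([:0, 1:] ^ N * [:-z, 1:] ^ N) x \<noteq> 0"
  show "pole_ratfun P N z x = poly P x / poly ([:0, 1:] ^ N * [:-z, 1:] ^ N) x"
    by (simp add: pole_ratfun_def poly_power uminus_add_conv_diff)
qed

lemma has_laurent_expansion_has_sum:
  assumes F: "f has_laurent_expansion F" and hol: "f holomorphic_on ball 0 r - {0}"
    and y: "y \<noteq> 0" "norm y < r"
  shows "((\<lambda>m. fls_nth F m * y powi m) has_sum f y) UNIV"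
    and "(\<lambda>m. norm (fls_nth F m * y powi m)) summable_on UNIV"
proof -
  define s where "s = fls_subdegree F"
  have hol': "f holomorphic_on eball 0 (ereal r) - {0}" using hol by simp
  have radius: "ereal (norm y) < fls_conv_radius F"
    using fls_conv_radius_ge[OF F hol'] y(2) by (metis less_ereal.simps(1) order.strict_trans2)
  have eval: "eval_fls F y = f y"
    by (rule eval_fls_eqI[OF F hol']) (use y in auto)
  define g where "g = (\<lambda>k::nat. fls_nth F (int k + s) * y powi (int k + s))"
  have "summable (\<lambda>k. norm (fls_nth F (int k + s) * y ^ k) * norm (y powi s))"
    using norm_summable_fls'[OF radius] by (intro summable_mult2) (simp add: s_def)
  then have norm_g: "summable (\<lambda>k. norm (g k))"
    using y(1) by (simp add: g_def power_int_add norm_mult mult_ac)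
  have "(g has_sum f y) UNIV"
    using sums_eval_fls[OF radius] y(1) eval
    by (intro norm_summable_imp_has_sum[OF norm_g]) (simp add: g_def s_def)
  moreover have "((\<lambda>k. norm (g k)) has_sum (\<Sum>k. norm (g k))) UNIV"
    by (intro norm_summable_imp_has_sum) (use norm_g summable_sums in auto)
  moreover have "inj (\<lambda>k::nat. int k + s)" by (simp add: inj_def)
  moreover have "fls_nth F m = 0" if "m \<notin> range (\<lambda>k::nat. int k + s)" for m
    using that by (metis (no_types, lifting) add.commute diff_add_cancel fls_eq0_below_subdegree
        nonneg_int_cases not_less rangeI s_def le_add_same_cancel2 diff_ge_0_iff_ge)
  ultimately show "((\<lambda>m. fls_nth F m * y powi m) has_sum f y) UNIV"
    and "(\<lambda>m. norm (fls_nth F m * y powi m)) summable_on UNIV"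
    unfolding g_def summable_on_def
    by (simp_all add: has_sum_reindex_vanishing[where g = "\<lambda>m. fls_nth F m * y powi m"]
        has_sum_reindex_vanishing[where g = "\<lambda>m. norm (fls_nth F m * y powi m)"]) blast
qed

lemma pole_ratfun_has_sum_at_infinity:
  assumes z: "z \<noteq> 0" and x: "norm x > norm z"
  shows "((\<lambda>m. fls_nth (pole_fls P N z fls_X_inv) (-m) * x powi m) has_sum pole_ratfun P N z x) UNIV"
    and "(\<lambda>m. norm (fls_nth (pole_fls P N z fls_X_inv) (-m) * x powi m)) summable_on UNIV"
proof -
  let ?F = "pole_fls P N z fls_X_inv" and ?f = "\<lambda>y. pole_ratfun P N z (inverse y)"
  have F: "?f has_laurent_expansion ?F"
    by (intro has_laurent_expansion_pole_ratfun has_laurent_expansion_fls_X_inv)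
  have hol: "?f holomorphic_on ball 0 (1 / norm z) - {0}"
    unfolding pole_ratfun_def
  proof (intro holomorphic_intros)
    fix y :: complex assume y: "y \<in> ball 0 (1 / norm z) - {0}"
    then have "norm z < inverse (norm y)"
      using z by (auto simp: field_simps)
    then have "inverse y - z \<noteq> 0"
      by (auto simp: norm_inverse)
    with y show "inverse y ^ N * (inverse y - z) ^ N \<noteq> 0" by simp
  qed auto
  have "0 < norm x" using x norm_ge_zero[of z] by linarith
  then have "inverse x \<noteq> 0" "norm (inverse x) < 1 / norm z"
    using x z by (auto simp: norm_divide field_simps)
  note sum = has_laurent_expansion_has_sum[OF F hol this]
  have "((\<lambda>m. fls_nth ?F m * inverse x powi m) has_sum pole_ratfun P N z x) UNIV"
    and "(\<lambda>m. norm (fls_nth ?F m * inverse x powi m)) summable_on UNIV"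
    using sum by simp_all
  moreover have "inverse x powi (- m) = x powi m" for m
    by (simp add: power_int_inverse power_int_minus)
  ultimately show "((\<lambda>m. fls_nth ?F (-m) * x powi m) has_sum pole_ratfun P N z x) UNIV"
    and "(\<lambda>m. norm (fls_nth ?F (-m) * x powi m)) summable_on UNIV"
    using has_sum_reindex_vanishing[of uminus "\<lambda>m. fls_nth ?F m * inverse x powi m"]
      summable_on_reindex_vanishing[of uminus "\<lambda>m. norm (fls_nth ?F m * inverse x powi m)"]
    by (simp_all add: inj_def surj_def)
qed

lemma eventually_at_notin_finite: "finite S \<Longrightarrow> eventually (\<lambda>x. x \<notin> S) (at (a::'a::t1_space))"
  using islimpt_finite islimpt_iff_eventually by blast

lemma eventually_at_0_inverse_notin_finite:
  "finite S \<Longrightarrow> eventually (\<lambda>y. inverse y \<notin> S) (at (0::complex))"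
  using eventually_at_notin_finite[of "inverse ` S" 0] by (auto elim!: eventually_mono simp: image_iff)

lemma rational_fn_has_laurent_expansion_inverse:
  assumes "rational_fn f"
  obtains F where "(\<lambda>y. f (inverse y)) has_laurent_expansion F"
proof -
  obtain p q :: "complex poly" where q: "q \<noteq> 0" "\<And>x. poly q x \<noteq> 0 \<Longrightarrow> f x = poly p x / poly q x"
    using assms unfolding rational_fn_def by blast
  have "eventually (\<lambda>y. inverse y \<notin> {x. poly q x = 0}) (at 0)"
    using q(1) by (intro eventually_at_0_inverse_notin_finite poly_roots_finite)
  then have ev: "eventually (\<lambda>y. poly p (inverse y) / poly q (inverse y) = f (inverse y)) (at 0)"
    by eventually_elim (simp add: q(2))
  have "(\<lambda>y. poly p (inverse y) / poly q (inverse y))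
      has_laurent_expansion poly_fls p fls_X_inv / poly_fls q fls_X_inv"
    by (intro laurent_expansion_intros has_laurent_expansion_poly)
  then show ?thesis
    using that has_laurent_expansion_cong[OF ev refl] by blast
qed

lemma rational_fn_eventually_eq_at_infinity_if_iota_inf_eq:
  assumes "rational_fn f" "rational_fn g" "iota_inf f = iota_inf g"
  shows "eventually (\<lambda>y. f (inverse y) = g (inverse y)) (at 0)"
proof -
  obtain F G where F: "(\<lambda>y. f (inverse y)) has_laurent_expansion F"
    and G: "(\<lambda>y. g (inverse y)) has_laurent_expansion G"
    using assms(1,2) rational_fn_has_laurent_expansion_inverse by metis
  have "fls_nth F (- m) = fls_nth G (- m)" for m
    using assms(3) unfolding iota_inf_def laurent_expansion_0_eqI[OF F] laurent_expansion_0_eqI[OF G]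
    by metis
  then have "F = G"
    by (intro fls_eqI) (metis minus_minus)
  then show ?thesis
    using F G unfolding has_laurent_expansion_def by (auto elim: eventually_elim2)
qed

lemma rational_fn_eq_off_finite_if_eventually_eq_at_infinity:
  assumes "rational_fn f" "rational_fn g"
    and "eventually (\<lambda>y. f (inverse y) = g (inverse y)) (at 0)"
  obtains S where "finite S" "\<And>x. x \<notin> S \<Longrightarrow> f x = g x"
proof -
  obtain p q :: "complex poly" where q: "q \<noteq> 0" "\<And>x. poly q x \<noteq> 0 \<Longrightarrow> f x = poly p x / poly q x"
    using assms(1) unfolding rational_fn_def by blast
  obtain p' q' :: "complex poly" where q': "q' \<noteq> 0" "\<And>x. poly q' x \<noteq> 0 \<Longrightarrow> g x = poly p' x / poly q' x"
    using assms(2) unfolding rational_fn_def by blast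
  define S where "S = {x. poly q x = 0} \<union> {x. poly q' x = 0}"
  have S: "finite S" using q(1) q'(1) by (simp add: S_def poly_roots_finite)
  have eq: "poly (p * q' - p' * q) x = 0" if "x \<notin> S" "f x = g x" for x
    using that q(2) q'(2) by (simp add: S_def frac_eq_eq)
  have "p * q' - p' * q = 0"
  proof (rule ccontr)
    assume "p * q' - p' * q \<noteq> 0"
    then have "eventually (\<lambda>y. inverse y \<notin> S \<union> {x. poly (p * q' - p' * q) x = 0}) (at 0)"
      by (intro eventually_at_0_inverse_notin_finite finite_UnI S poly_roots_finite)
    with assms(3) have "eventually (\<lambda>_. False) (at (0::complex))"
      by eventually_elim (use eq in blast)
    then show False by simp
  qed
  then have "poly p x * poly q' x = poly p' x * poly q x" for x
    by (metis poly_mult right_minus_eq)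
  then have "f x = g x" if "x \<notin> S" for x
    using that q(2) q'(2) by (simp add: S_def frac_eq_eq)
  with S that show ?thesis by blast
qed

lemma laurent_expansion_shift_cong_off_finite:
  assumes "finite S" "\<And>x. x \<notin> S \<Longrightarrow> f x = g x"
  shows "laurent_expansion (\<lambda>x. f (x + c)) 0 = laurent_expansion (\<lambda>x. g (x + c)) 0"
proof (rule laurent_expansion_cong)
  have "eventually (\<lambda>x. x \<notin> (\<lambda>s. s - c) ` S) (at (0::complex))"
    using assms(1) by (intro eventually_at_notin_finite) simp
  then show "eventually (\<lambda>x. f (x + c) = g (x + c)) (at 0)"
    by eventually_elim (metis add_diff_cancel_right' assms(2) image_eqI)
qed simp

lemma D_Pz_expansions:
  assumes z: "z \<noteq> 0" and \<alpha>: "\<alpha> \<in> D_Pz smV Y om smW YW z"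
  obtains P N where
    "\<And>m. \<alpha> (Yopp smV Y om smW YW v m w) = fls_nth (pole_fls P N z fls_X_inv) (-m)"
    "laurent_expansion (f_val smV Y om smW YW v \<alpha> w) 0 = pole_fls P N z fls_X"
    "laurent_expansion (\<lambda>x. f_val smV Y om smW YW v \<alpha> w (x + z)) 0 = pole_fls P N z (fls_X + fls_const z)"
proof -
  define c where "c = (\<lambda>m. \<alpha> (Yopp smV Y om smW YW v m w))"
  obtain N P where conv: "\<And>x. norm x > norm z \<Longrightarrow> (\<lambda>m. norm (c m * x powi m)) summable_on UNIV
      \<and> ((\<lambda>m. c m * x powi m) has_sum pole_ratfun P N z x) UNIV"
    using \<alpha> unfolding D_Pz_def c_def pole_ratfun_def by blast
  let ?R = "pole_ratfun P N z" and ?f = "f_val smV Y om smW YW v \<alpha> w"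
  have c: "c = (\<lambda>m. fls_nth (pole_fls P N z fls_X_inv) (-m))"
    using conv pole_ratfun_has_sum_at_infinity[OF z] by (intro two_sided_series_coeffs_unique) blast+
  have R: "iota_inf ?R = c"
    unfolding iota_inf_def c laurent_expansion_0_eqI[OF has_laurent_expansion_pole_ratfun[OF
        has_laurent_expansion_fls_X_inv]] ..
  then have "rational_fn ?R \<and> iota_inf ?R = c"
    using rational_fn_pole_ratfun by blast
  then have "rational_fn ?f \<and> iota_inf ?f = c"
    unfolding f_val_def c_def[symmetric] by (rule someI[where P = "\<lambda>f. rational_fn f \<and> iota_inf f = c"])
  then obtain S where S: "finite S" "\<And>x. x \<notin> S \<Longrightarrow> ?f x = ?R x"
    using rational_fn_eq_off_finite_if_eventually_eq_at_infinity
      rational_fn_eventually_eq_at_infinity_if_iota_inf_eq rational_fn_pole_ratfun R by metis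
  have "laurent_expansion ?f 0 = pole_fls P N z fls_X"
    using laurent_expansion_shift_cong_off_finite[where f = ?f and g = ?R and c = 0, OF S]
      has_laurent_expansion_pole_ratfun[OF has_laurent_expansion_fps_X, of P N z]
    by (simp add: laurent_expansion_0_eqI)
  moreover have "laurent_expansion (\<lambda>x. ?f (x + z)) 0 = pole_fls P N z (fls_X + fls_const z)"
    using laurent_expansion_shift_cong_off_finite[where f = ?f and g = ?R and c = z, OF S]
      has_laurent_expansion_pole_ratfun[OF has_laurent_expansion_add[OF has_laurent_expansion_fps_X
        has_laurent_expansion_const[of z]], of P N z]
    by (simp add: laurent_expansion_0_eqI)
  ultimately show ?thesis using that c by (simp add: c_def fun_eq_iff)
qed

theorem proposition3p22:
  fixes smV :: "complex \<Rightarrow> 'v::ab_group_add \<Rightarrow> 'v"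
    and Y :: "'v \<Rightarrow> int \<Rightarrow> 'v \<Rightarrow> 'v"
    and vac om :: 'v
    and smW :: "complex \<Rightarrow> 'w::ab_group_add \<Rightarrow> 'w"
    and YW :: "'v \<Rightarrow> int \<Rightarrow> 'w \<Rightarrow> 'w"
    and z :: complex and v :: 'v and \<alpha> :: "'w \<Rightarrow> complex"
  assumes "is_VOA smV Y vac om"
    and "is_weak_module Y vac smW YW smV"
    and "z \<noteq> 0"
    and "\<alpha> \<in> D_Pz smV Y om smW YW z"
  shows "\<forall>p a.
     fprod2 (\<lambda>i j. fsum (\<lambda>b. delta_coeff i j b * z powi b))
            (\<lambda>i j. if i = 0 then Ystar smV Y om smW YW v \<alpha> j else (\<lambda>_. 0)) p a
   - fprod2 (\<lambda>i j. fsum (\<lambda>b. delta_coeff_neg i j b * z powi b))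
            (\<lambda>i j. if i = 0 then YR smV Y om smW YW v \<alpha> j else (\<lambda>_. 0)) p a
   = fprod2 (\<lambda>i j. fsum (\<lambda>s. delta_coeff s j i * z powi s))
            (\<lambda>i j. if j = 0 then YL smV Y om smW YW z v \<alpha> i else (\<lambda>_. 0)) p a"
proof (intro allI ext)
  fix p a :: int and w :: 'w
  obtain P N where
    Ystar: "\<And>m. Ystar smV Y om smW YW v \<alpha> m w = fls_nth (pole_fls P N z fls_X_inv) (-m)" and
    YR: "\<And>m. YR smV Y om smW YW v \<alpha> m w = fls_nth (pole_fls P N z fls_X) m" and
    YL: "\<And>m. YL smV Y om smW YW z v \<alpha> m w = fls_nth (pole_fls P N z (fls_X + fls_const z)) m"
    using D_Pz_expansions[OF assms(3,4), of v w] unfolding Ystar_def YR_def YL_def iota0_def by metis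
  show "(fprod2 (\<lambda>i j. fsum (\<lambda>b. delta_coeff i j b * z powi b))
            (\<lambda>i j. if i = 0 then Ystar smV Y om smW YW v \<alpha> j else (\<lambda>_. 0)) p a
       - fprod2 (\<lambda>i j. fsum (\<lambda>b. delta_coeff_neg i j b * z powi b))
            (\<lambda>i j. if i = 0 then YR smV Y om smW YW v \<alpha> j else (\<lambda>_. 0)) p a) w
     = fprod2 (\<lambda>i j. fsum (\<lambda>s. delta_coeff s j i * z powi s))
            (\<lambda>i j. if j = 0 then YL smV Y om smW YW z v \<alpha> i else (\<lambda>_. 0)) p a w"
    using residue_sum_pole_fls[OF assms(3), of P N p a]
    by (simp add: fprod2_delta_coeff[where T = "Ystar smV Y om smW YW v \<alpha>", OF Ystar]
        fprod2_delta_coeff_neg[where T = "YR smV Y om smW YW v \<alpha>", OF assms(3) YR]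
        fprod2_delta_coeff_swap[where T = "YL smV Y om smW YW z v \<alpha>", OF assms(3) YL]
        residue_sum_def) (metis add_diff_cancel_left')
qed

end
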